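(* Let $A$ be a partially ordered set, $G$ a passable composite game over $A$, and $a\in A$. If every left option $G^L$ of $G$ satisfies $G^L\le [a]$, then $G\le [a]$.
   Context: Games over a poset $A$ are defined inductively: for each $a\in A$ there is an atomic game $[a]$, which has no options; and if $L$ and $R$ are non-empty sets of games, then $\{L\mid R\}$ is a composite game with left options $L$ and right options $R$. The relations $\le$ and $\lhd$ are defined by simultaneous recursion: $G\le H$ iff (1) every left option $G^L$ of $G$ satisfies $G^L\lhd H$, (2) every right option $H^R$ of $H$ satisfies $G\lhd H^R$, and (3) if $G$ or $H$ is atomic then $G\lhd H$; and $G\lhd H$ iff (1) some right option $G^R$ of $G$ satisfies $G^R\le H$, or (2) some left option $H^L$ of $H$ satisfies $G\le H^L$, or (3) $G=[a]$, $H=[b]$ are atomic and $a\le b$. A game $G$ is passable if $G\lhd G$ and recursively all its options are passable. *)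

theory Defs
  imports Main
begin

text \<open>A composite game has a non-empty
family of left options and a non-empty family of right options; the families are
indexed by an arbitrary index type 'i (non-empty since HOL types are non-empty),
so the option sets are exactly the images of these families.\<close>

datatype ('a, 'i) game = Atom 'a | Comp "'i \<Rightarrow> ('a, 'i) game" "'i \<Rightarrow> ('a, 'i) game"

fun lefts :: "('a, 'i) game \<Rightarrow> ('a, 'i) game set" where
  "lefts (Atom a) = {}"
| "lefts (Comp L R) = range L"

fun rights :: "('a, 'i) game \<Rightarrow> ('a, 'i) game set" where
  "rights (Atom a) = {}"
| "rights (Comp L R) = range R"

fun is_atom :: "('a, 'i) game \<Rightarrow> bool" where
  "is_atom (Atom a) = True"
| "is_atom (Comp L R) = False"

text \<open>The simultaneous recursive definition of \<le> and \<lhd>; since games are well-founded,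
the least fixed point given by the inductive definition coincides with the recursion.\<close>

inductive game_le :: "('a::order, 'i) game \<Rightarrow> ('a, 'i) game \<Rightarrow> bool"
  and game_lf :: "('a::order, 'i) game \<Rightarrow> ('a, 'i) game \<Rightarrow> bool" where
  le_intro: "\<lbrakk>\<forall>GL\<in>lefts G. game_lf GL H; \<forall>HR\<in>rights H. game_lf G HR;
             is_atom G \<or> is_atom H \<longrightarrow> game_lf G H\<rbrakk> \<Longrightarrow> game_le G H"
| lf_right: "\<lbrakk>GR \<in> rights G; game_le GR H\<rbrakk> \<Longrightarrow> game_lf G H"
| lf_left: "\<lbrakk>HL \<in> lefts H; game_le G HL\<rbrakk> \<Longrightarrow> game_lf G H"
| lf_atom: "a \<le> b \<Longrightarrow> game_lf (Atom a) (Atom b)"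

inductive passable :: "('a::order, 'i) game \<Rightarrow> bool" where
  "\<lbrakk>game_lf G G; \<forall>X\<in>lefts G. passable X; \<forall>X\<in>rights G. passable X\<rbrakk> \<Longrightarrow> passable G"

end

theory Submission
  imports Defs
begin

text \<open>If \<open>G \<lhd> G\<close> and every \<open>G\<^sup>L \<le> [a]\<close>, then every \<open>X \<le> G\<close> satisfies \<open>X \<le> [a]\<close>, by
induction on \<open>X\<close>. Since \<open>[a]\<close> is atomic with no right options, it suffices that \<open>X\<close> and its
left options are \<open>\<lhd> [a]\<close>. Each of them is \<open>\<lhd> G\<close> (for \<open>X\<close> itself because \<open>X \<le> G \<lhd> G\<close>), and a
witness of \<open>Y \<lhd> G\<close> is either a right option \<open>Y\<^sup>R \<le> G\<close>, so \<open>Y\<^sup>R \<le> [a]\<close> by induction, or a left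
option with \<open>Y \<le> G\<^sup>L \<le> [a]\<close>. Take \<open>X = G\<close>; of passability only \<open>G \<lhd> G\<close> is needed.\<close>

definition option_rel :: "(('a, 'i) game \<times> ('a, 'i) game) set" where
  "option_rel = {(X, G). X \<in> lefts G \<or> X \<in> rights G}"

lemma left_option_rel: "X \<in> lefts G \<Longrightarrow> (X, G) \<in> option_rel"
  and right_option_rel: "X \<in> rights G \<Longrightarrow> (X, G) \<in> option_rel"
  by (simp_all add: option_rel_def)

lemma wf_option_rel: "wf option_rel"
proof (rule wfUNIVI)
  fix P :: "('a, 'i) game \<Rightarrow> bool" and G
  assume step: "\<forall>G. (\<forall>X. (X, G) \<in> option_rel \<longrightarrow> P X) \<longrightarrow> P G"
  show "P G"
  proof (induction G)
    case (Atom a)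
    have "\<forall>X. (X, Atom a) \<in> option_rel \<longrightarrow> P X" by (simp add: option_rel_def)
    then show ?case using step by blast
  next
    case (Comp L R)
    then have "\<forall>X. (X, Comp L R) \<in> option_rel \<longrightarrow> P X" by (auto simp add: option_rel_def)
    then show ?case using step by blast
  qed
qed

lemma game_le_iff:
  "game_le G H \<longleftrightarrow> (\<forall>GL\<in>lefts G. game_lf GL H) \<and> (\<forall>HR\<in>rights H. game_lf G HR)
     \<and> (is_atom G \<or> is_atom H \<longrightarrow> game_lf G H)"
  by (auto elim: game_le.cases intro: le_intro)

lemma game_le_leftD: "game_le G H \<Longrightarrow> GL \<in> lefts G \<Longrightarrow> game_lf GL H"
  and game_le_rightD: "game_le G H \<Longrightarrow> HR \<in> rights H \<Longrightarrow> game_lf G HR"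
  and game_le_atomD: "game_le G H \<Longrightarrow> is_atom G \<or> is_atom H \<Longrightarrow> game_lf G H"
  by (simp_all add: game_le_iff)

lemma game_le_Atom_Atom: "a \<le> b \<Longrightarrow> game_le (Atom a) (Atom b)"
  by (simp add: game_le_iff lf_atom)

lemma game_le_refl: "game_le G G"
proof (induction G rule: wf_induct_rule[OF wf_option_rel])
  case (1 G)
  show ?case
  proof (rule le_intro)
    show "\<forall>GL\<in>lefts G. game_lf GL G" using 1 left_option_rel by (blast intro: lf_left)
    show "\<forall>GR\<in>rights G. game_lf G GR" using 1 right_option_rel by (blast intro: lf_right)
    show "is_atom G \<or> is_atom G \<longrightarrow> game_lf G G" by (cases G) (auto intro: lf_atom)
  qed
qed

lemma game_lf_le_trans_step:
  assumes "game_lf X Y" and "game_le Y Z"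
    and IH_X: "\<And>XR. XR \<in> rights X \<Longrightarrow> game_le XR Y \<Longrightarrow> game_le Y Z \<Longrightarrow> game_le XR Z"
    and IH_Y: "\<And>YL. YL \<in> lefts Y \<Longrightarrow> game_le X YL \<Longrightarrow> game_lf YL Z \<Longrightarrow> game_lf X Z"
    and IH_Z: "\<And>ZL. ZL \<in> lefts Z \<Longrightarrow> game_le X Y \<Longrightarrow> game_le Y ZL \<Longrightarrow> game_le X ZL"
  shows "game_lf X Z"
  using \<open>game_lf X Y\<close>
proof cases
  case (lf_right XR)
  then show ?thesis using IH_X \<open>game_le Y Z\<close> by (blast intro: Defs.lf_right)
next
  case (lf_left YL)
  then show ?thesis using IH_Y \<open>game_le Y Z\<close> game_le_leftD by blast
next
  case (lf_atom d b)
  then have "game_lf (Atom b) Z" using \<open>game_le Y Z\<close> by (simp add: game_le_atomD)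
  then show ?thesis
  proof cases
    case (lf_left ZL)
    then show ?thesis
      using IH_Z \<open>Y = Atom b\<close> \<open>X = Atom d\<close> \<open>d \<le> b\<close> game_le_Atom_Atom
      by (blast intro: Defs.lf_left)
  next
    case (lf_atom c)
    then show ?thesis using \<open>X = Atom d\<close> \<open>d \<le> b\<close> by (auto intro: Defs.lf_atom)
  qed simp
qed

lemma game_le_lf_trans_step:
  assumes "game_le X Y" and "game_lf Y Z"
    and IH_X: "\<And>XR. XR \<in> rights X \<Longrightarrow> game_le XR Y \<Longrightarrow> game_le Y Z \<Longrightarrow> game_le XR Z"
    and IH_Y: "\<And>YR. YR \<in> rights Y \<Longrightarrow> game_lf X YR \<Longrightarrow> game_le YR Z \<Longrightarrow> game_lf X Z"
    and IH_Z: "\<And>ZL. ZL \<in> lefts Z \<Longrightarrow> game_le X Y \<Longrightarrow> game_le Y ZL \<Longrightarrow> game_le X ZL"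
  shows "game_lf X Z"
  using \<open>game_lf Y Z\<close>
proof cases
  case (lf_right YR)
  then show ?thesis using IH_Y \<open>game_le X Y\<close> game_le_rightD by blast
next
  case (lf_left ZL)
  then show ?thesis using IH_Z \<open>game_le X Y\<close> by (blast intro: Defs.lf_left)
next
  case (lf_atom b c)
  then have "game_lf X (Atom b)" using \<open>game_le X Y\<close> by (simp add: game_le_atomD)
  then show ?thesis
  proof cases
    case (lf_right XR)
    then show ?thesis
      using IH_X \<open>Y = Atom b\<close> \<open>Z = Atom c\<close> \<open>b \<le> c\<close> game_le_Atom_Atom
      by (blast intro: Defs.lf_right)
  next
    case (lf_atom d)
    then show ?thesis using \<open>Z = Atom c\<close> \<open>b \<le> c\<close> by (auto intro: Defs.lf_atom)
  qed simp
qed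

lemma game_le_lf_trans_all:
  "(game_le X Y \<longrightarrow> game_le Y Z \<longrightarrow> game_le X Z) \<and>
   (game_lf X Y \<longrightarrow> game_le Y Z \<longrightarrow> game_lf X Z) \<and>
   (game_le X Y \<longrightarrow> game_lf Y Z \<longrightarrow> game_lf X Z)"
proof (induction "(X, Y, Z)" arbitrary: X Y Z
    rule: wf_induct_rule[OF wf_lex_prod[OF wf_option_rel wf_lex_prod[OF wf_option_rel wf_option_rel]]])
  case 1
  have X_le_le: "game_le X' Y' \<Longrightarrow> game_le Y' Z' \<Longrightarrow> game_le X' Z'"
    and X_lf_le: "game_lf X' Y' \<Longrightarrow> game_le Y' Z' \<Longrightarrow> game_lf X' Z'"
    if "(X', X) \<in> option_rel" for X' Y' Z'
    using "1"[of X' Y' Z'] that by simp_all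
  have Y_le_lf: "game_le X Y' \<Longrightarrow> game_lf Y' Z' \<Longrightarrow> game_lf X Z'"
    and Y_lf_le: "game_lf X Y' \<Longrightarrow> game_le Y' Z' \<Longrightarrow> game_lf X Z'"
    if "(Y', Y) \<in> option_rel" for Y' Z'
    using "1"[of X Y' Z'] that by simp_all
  have Z_le_le: "game_le X Y \<Longrightarrow> game_le Y Z' \<Longrightarrow> game_le X Z'"
    and Z_le_lf: "game_le X Y \<Longrightarrow> game_lf Y Z' \<Longrightarrow> game_lf X Z'"
    if "(Z', Z) \<in> option_rel" for Z'
    using "1"[of X Y Z'] that by simp_all
  have lf_le: "game_lf X Z" if "game_lf X Y" "game_le Y Z"
    by (rule game_lf_le_trans_step[OF that X_le_le[OF right_option_rel]
          Y_le_lf[OF left_option_rel] Z_le_le[OF left_option_rel]])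
  have le_lf: "game_lf X Z" if "game_le X Y" "game_lf Y Z"
    by (rule game_le_lf_trans_step[OF that X_le_le[OF right_option_rel]
          Y_lf_le[OF right_option_rel] Z_le_le[OF left_option_rel]])
  have le_le: "game_le X Z" if "game_le X Y" "game_le Y Z"
  proof (rule le_intro)
    show "\<forall>XL\<in>lefts X. game_lf XL Z"
      using that game_le_leftD X_lf_le[OF left_option_rel] by blast
    show "\<forall>ZR\<in>rights Z. game_lf X ZR"
      using that game_le_rightD Z_le_lf[OF right_option_rel] by blast
    show "is_atom X \<or> is_atom Z \<longrightarrow> game_lf X Z"
      using that game_le_atomD lf_le le_lf by blast
  qed
  show ?case using le_le lf_le le_lf by blast
qed

lemma game_le_trans: "game_le X Y \<Longrightarrow> game_le Y Z \<Longrightarrow> game_le X Z"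
  and game_le_lf_trans: "game_le X Y \<Longrightarrow> game_lf Y Z \<Longrightarrow> game_lf X Z"
  using game_le_lf_trans_all by blast+

lemma game_lf_Atom_if_lf:
  assumes "game_lf Y G" and "\<not> is_atom G"
    and lefts_G: "\<forall>GL\<in>lefts G. game_le GL (Atom a)"
    and rights_Y: "\<forall>YR\<in>rights Y. game_le YR G \<longrightarrow> game_le YR (Atom a)"
  shows "game_lf Y (Atom a)"
  using \<open>game_lf Y G\<close>
proof cases
  case (lf_right YR)
  then show ?thesis using rights_Y by (blast intro: Defs.lf_right)
next
  case (lf_left GL)
  then have "game_le Y (Atom a)" using lefts_G game_le_trans by blast
  then show ?thesis by (simp add: game_le_atomD)
next
  case lf_atom
  then show ?thesis using \<open>\<not> is_atom G\<close> by simp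
qed

lemma game_le_Atom_if_le:
  assumes "game_lf G G" and "\<not> is_atom G"
    and lefts_G: "\<forall>GL\<in>lefts G. game_le GL (Atom a)"
  shows "game_le X G \<Longrightarrow> game_le X (Atom a)"
proof (induction X rule: wf_induct_rule[OF wf_trancl[OF wf_option_rel]])
  case (1 X)
  have below_X: "game_le R G \<Longrightarrow> game_le R (Atom a)" if "(R, X) \<in> option_rel\<^sup>+" for R
    using 1 that by blast
  have "game_lf XL (Atom a)" if "XL \<in> lefts X" for XL
  proof (rule game_lf_Atom_if_lf[OF _ \<open>\<not> is_atom G\<close> lefts_G])
    show "game_lf XL G" using \<open>game_le X G\<close> that by (rule game_le_leftD)
    show "\<forall>R\<in>rights XL. game_le R G \<longrightarrow> game_le R (Atom a)"
      using below_X that left_option_rel right_option_rel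
      by (meson trancl.r_into_trancl trancl_into_trancl2)
  qed
  moreover have "game_lf X (Atom a)"
  proof (rule game_lf_Atom_if_lf[OF _ \<open>\<not> is_atom G\<close> lefts_G])
    show "game_lf X G" using \<open>game_le X G\<close> \<open>game_lf G G\<close> by (rule game_le_lf_trans)
    show "\<forall>R\<in>rights X. game_le R G \<longrightarrow> game_le R (Atom a)"
      using below_X right_option_rel by blast
  qed
  ultimately show ?case by (simp add: game_le_iff)
qed

theorem proposition6p13:
  fixes G :: "('a::order, 'i) game" and a :: 'a
  assumes "passable G"
    and "\<not> is_atom G"
    and "\<forall>GL\<in>lefts G. game_le GL (Atom a)"
  shows "game_le G (Atom a)"
proof -
  have "game_lf G G" using \<open>passable G\<close> by (cases rule: passable.cases)
  then show ?thesis using assms(2,3) game_le_refl by (rule game_le_Atom_if_le)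
qed

end
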